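(* Any quantum oracle algorithm that solves $\mathsf{LCS\text{-}RLE}$ with probability at least $2/3$ requires $\tilde\Omega(n)$ queries, where $n$ is the encoded length of the inputs.
   Context: A string $\tilde s$ has run-length encoding (RLE) $s=s[1]\cdots s[m]$, its sequence of maximal runs of identical characters, each run having character $C(s[i])$ and length $R(s[i])$; $|s|=m$ is the encoded length. An RLE string $t$ is a generalized substring of $s$ if $\tilde t$ is a substring of $\tilde s$. The problem $\mathsf{LCS\text{-}RLE}$: given quantum oracle access to two RLE strings $A$ and $B$ only through the unitaries $|i\rangle|c\rangle|r\rangle\mapsto|i\rangle|c\oplus C(S[i])\rangle|r\oplus R(S[i])\rangle$ for $S\in\{A,B\}$ (no prefix-sum oracle), find a longest common generalized substring $s$ of $A$ and $B$ (i.e. $\tilde s$ is a longest common substring of $\tilde A$ and $\tilde B$) and output a triple $(i_A,i_B,\ell)$ with $\ell=|s|$, where an occurrence of $\tilde s$ in $\tilde A$ starts within the run $A[i_A]$ and one in $\tilde B$ starts within the run $B[i_B]$. $\tilde\Omega(\cdot)$ hides polylogarithmic factors. *)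

theory Defs
  imports Complex_Main
begin

text \<open>An RLE string is a list of runs (character, run length); runs are indexed from 0.\<close>
type_synonym rle = "(nat \<times> nat) list"

definition decode :: "rle \<Rightarrow> nat list" where
  "decode S = concat (map (\<lambda>(c, r). replicate r c) S)"

definition valid_rle :: "nat \<Rightarrow> nat \<Rightarrow> rle \<Rightarrow> bool" where
  "valid_rle dc dr S \<longleftrightarrow>
     (\<forall>i < length S. fst (S ! i) < dc \<and> 0 < snd (S ! i) \<and> snd (S ! i) < dr) \<and>
     (\<forall>i. Suc i < length S \<longrightarrow> fst (S ! i) \<noteq> fst (S ! Suc i))"

text \<open>Encoded length (number of maximal runs) of a plain string.\<close>
definition enc_len :: "nat list \<Rightarrow> nat" where
  "enc_len u = length (remdups_adj u)"

definition occurs_at :: "nat list \<Rightarrow> nat list \<Rightarrow> nat \<Rightarrow> bool" where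
  "occurs_at u v p \<longleftrightarrow> p + length u \<le> length v \<and> take (length u) (drop p v) = u"

definition run_start :: "rle \<Rightarrow> nat \<Rightarrow> nat" where
  "run_start S i = sum_list (map snd (take i S))"

definition starts_in_run :: "rle \<Rightarrow> nat \<Rightarrow> nat \<Rightarrow> bool" where
  "starts_in_run S i p \<longleftrightarrow> i < length S \<and> run_start S i \<le> p \<and> p < run_start S (Suc i)"

definition common_substr :: "rle \<Rightarrow> rle \<Rightarrow> nat list \<Rightarrow> bool" where
  "common_substr A B u \<longleftrightarrow> (\<exists>p. occurs_at u (decode A) p) \<and> (\<exists>q. occurs_at u (decode B) q)"

definition longest_common_substr :: "rle \<Rightarrow> rle \<Rightarrow> nat list \<Rightarrow> bool" where
  "longest_common_substr A B u \<longleftrightarrow>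
     common_substr A B u \<and> (\<forall>v. common_substr A B v \<longrightarrow> length v \<le> length u)"

definition lcs_rle_correct :: "rle \<Rightarrow> rle \<Rightarrow> nat \<times> nat \<times> nat \<Rightarrow> bool" where
  "lcs_rle_correct A B out \<longleftrightarrow>
     (case out of (iA, iB, l) \<Rightarrow>
       \<exists>u. longest_common_substr A B u \<and> l = enc_len u \<and>
           (\<exists>p. occurs_at u (decode A) p \<and> starts_in_run A iA p) \<and>
           (\<exists>q. occurs_at u (decode B) q \<and> starts_in_run B iB q))"

text \<open>Computational basis: index register {0..<n}, character register {0..<dc},
  run-length register {0..<dr}, workspace {0..<m}.\<close>
type_synonym basis = "nat \<times> nat \<times> nat \<times> nat"
type_synonym qstate = "basis \<Rightarrow> complex"
type_synonym qop = "basis \<Rightarrow> basis \<Rightarrow> complex"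

definition basis_set :: "nat \<Rightarrow> nat \<Rightarrow> nat \<Rightarrow> nat \<Rightarrow> basis set" where
  "basis_set n dc dr m = {0..<n} \<times> {0..<dc} \<times> {0..<dr} \<times> {0..<m}"

definition unitary_on :: "basis set \<Rightarrow> qop \<Rightarrow> bool" where
  "unitary_on X U \<longleftrightarrow>
     (\<forall>x\<in>X. \<forall>y\<in>X. (\<Sum>z\<in>X. U x z * cnj (U y z)) = (if x = y then 1 else 0))"

definition apply_op :: "basis set \<Rightarrow> qop \<Rightarrow> qstate \<Rightarrow> qstate" where
  "apply_op X U \<psi> = (\<lambda>x. \<Sum>y\<in>X. U x y * \<psi> y)"

definition oracle_map :: "nat \<Rightarrow> nat \<Rightarrow> rle \<Rightarrow> basis \<Rightarrow> basis" where
  "oracle_map dc dr S = (\<lambda>(i, c, r, w).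
     (i, (c + fst (S ! i)) mod dc, (r + snd (S ! i)) mod dr, w))"

definition apply_oracle :: "basis set \<Rightarrow> nat \<Rightarrow> nat \<Rightarrow> rle \<Rightarrow> qstate \<Rightarrow> qstate" where
  "apply_oracle X dc dr S \<psi> = (\<lambda>x. \<Sum>y\<in>X. if oracle_map dc dr S y = x then \<psi> y else 0)"

definition init_state :: qstate where
  "init_state = (\<lambda>x. if x = (0, 0, 0, 0) then 1 else 0)"

text \<open>State after t queries: U_t O_{sel(t-1)} U_{t-1} ... O_{sel 0} U_0 |0>;
  sel k = False means the k-th query goes to the oracle of A, True to that of B.\<close>
fun run_alg :: "nat \<Rightarrow> nat \<Rightarrow> nat \<Rightarrow> nat \<Rightarrow> (nat \<Rightarrow> qop) \<Rightarrow> (nat \<Rightarrow> bool)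
                 \<Rightarrow> rle \<Rightarrow> rle \<Rightarrow> nat \<Rightarrow> qstate" where
  "run_alg n dc dr m U sel A B 0 = apply_op (basis_set n dc dr m) (U 0) init_state"
| "run_alg n dc dr m U sel A B (Suc t) =
     apply_op (basis_set n dc dr m) (U (Suc t))
       (apply_oracle (basis_set n dc dr m) dc dr (if sel t then B else A)
          (run_alg n dc dr m U sel A B t))"

definition success_prob :: "nat \<Rightarrow> nat \<Rightarrow> nat \<Rightarrow> nat \<Rightarrow> (nat \<Rightarrow> qop) \<Rightarrow> (nat \<Rightarrow> bool)
     \<Rightarrow> (basis \<Rightarrow> nat \<times> nat \<times> nat) \<Rightarrow> nat \<Rightarrow> rle \<Rightarrow> rle \<Rightarrow> real" where
  "success_prob n dc dr m U sel out T A B =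
     (\<Sum>x\<in>basis_set n dc dr m.
        if lcs_rle_correct A B (out x) then (cmod (run_alg n dc dr m U sel A B T x))\<^sup>2 else 0)"

end

theory Submission
  imports Defs "Jordan_Normal_Form.Determinant"
begin

(* A reduction from the threshold function on k bits. For Z a subset of {0..<k}, the hard pair
   A_Z, B_Z starts with a common head whose i-th run has length 4 if i is in Z and 2 otherwise,
   followed by a separator that differs between A_Z and B_Z, a common block k^L, and tails over
   disjoint alphabets. A longest common substring is therefore the head (of length 2k + 2|Z|) or the
   block, so the run of A_Z in which it starts tells whether 2k + 2|Z| < L, and moving from Z to
   Z + j changes a single run of each input.
   Ambainis' adversary argument then bounds the number T of queries: the sum over all edges
   (Z, Z + j) with |Z| = h of |<psi_Z, psi_(Z+j)>| starts at its maximum, a query lowers it by at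
   most the total query magnitude (at most the number of Z and Z + j involved), and at the end each
   term is at most 17/18 because the two states must give different answers with probability 2/3.
   With k = 2h + 1 and L = 6h + 3 this gives T >= (h + 1)/36, which is linear in n. *)

section \<open>Inner products of states\<close>

lemma unitary_on_columns_orthonormal:
  assumes fin: "finite X" and un: "unitary_on X U" and y: "y \<in> X" and z: "z \<in> X"
  shows "(\<Sum>x\<in>X. cnj (U x y) * U x z) = (if y = z then 1 else 0)"
proof -
  define N where "N = card X"
  obtain e where e: "bij_betw e {0..<N} X" using ex_bij_betw_nat_finite[OF fin] N_def by blast
  define M :: "complex mat" where "M = mat N N (\<lambda>(i, j). U (e i) (e j))"
  define M' :: "complex mat" where "M' = mat N N (\<lambda>(i, j). cnj (U (e j) (e i)))"
  have eX: "i < N \<Longrightarrow> e i \<in> X" for i using e by (auto simp: bij_betw_def)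
  have e_inj: "i < N \<Longrightarrow> j < N \<Longrightarrow> e i = e j \<longleftrightarrow> i = j" for i j
    using e by (auto simp: bij_betw_def inj_on_def)
  have reindex: "(\<Sum>l<N. f (e l)) = (\<Sum>x\<in>X. f x)" for f :: "_ \<Rightarrow> complex"
    using sum.reindex_bij_betw[OF e, of f] by (simp add: atLeast0LessThan)
  have carrier: "M \<in> carrier_mat N N" "M' \<in> carrier_mat N N" by (auto simp: M_def M'_def)
  have "M * M' = 1\<^sub>m N"
  proof (rule eq_matI)
    fix i j assume ij: "i < dim_row (1\<^sub>m N)" "j < dim_col (1\<^sub>m N)"
    then have "(M * M') $$ (i, j) = (\<Sum>l<N. U (e i) (e l) * cnj (U (e j) (e l)))"
      by (simp add: M_def M'_def scalar_prod_def atLeast0LessThan)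
    also have "\<dots> = (\<Sum>x\<in>X. U (e i) x * cnj (U (e j) x))" by (rule reindex)
    also have "\<dots> = (if e i = e j then 1 else 0)" using un ij eX by (simp add: unitary_on_def)
    also have "\<dots> = 1\<^sub>m N $$ (i, j)" using ij e_inj by simp
    finally show "(M * M') $$ (i, j) = 1\<^sub>m N $$ (i, j)" .
  qed (auto simp: M_def M'_def)
  then have left_inverse: "M' * M = 1\<^sub>m N" using mat_mult_left_right_inverse[OF carrier] by blast
  obtain i where i: "i < N" "e i = y" using e y by (auto simp: bij_betw_def)
  obtain j where j: "j < N" "e j = z" using e z by (auto simp: bij_betw_def)
  have "(\<Sum>x\<in>X. cnj (U x y) * U x z) = (\<Sum>l<N. cnj (U (e l) (e i)) * U (e l) (e j))"
    using reindex[of "\<lambda>x. cnj (U x y) * U x z"] i j by simp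
  also have "\<dots> = (M' * M) $$ (i, j)" using i j
    by (simp add: M_def M'_def scalar_prod_def atLeast0LessThan)
  also have "\<dots> = (if y = z then 1 else 0)" using left_inverse i j e_inj by auto
  finally show ?thesis .
qed

definition inner_on :: "'a set \<Rightarrow> ('a \<Rightarrow> complex) \<Rightarrow> ('a \<Rightarrow> complex) \<Rightarrow> complex" where
  "inner_on X \<psi> \<phi> = (\<Sum>x\<in>X. \<psi> x * cnj (\<phi> x))"

definition norm2_on :: "'a set \<Rightarrow> ('a \<Rightarrow> complex) \<Rightarrow> real" where
  "norm2_on X \<psi> = (\<Sum>x\<in>X. (cmod (\<psi> x))\<^sup>2)"

definition query_magnitude :: "('i \<times> 'w) set \<Rightarrow> 'i \<Rightarrow> ('i \<times> 'w \<Rightarrow> complex) \<Rightarrow> real" where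
  "query_magnitude X j \<psi> = (\<Sum>x\<in>{x\<in>X. fst x = j}. (cmod (\<psi> x))\<^sup>2)"

lemma inner_on_self: "inner_on X \<psi> \<psi> = complex_of_real (norm2_on X \<psi>)"
  unfolding inner_on_def norm2_on_def of_real_sum by (simp add: complex_norm_square[symmetric])

lemma sum_query_magnitude_le:
  assumes "finite X" "finite J"
  shows "(\<Sum>j\<in>J. query_magnitude X j \<psi>) \<le> norm2_on X \<psi>"
proof -
  have "(\<Sum>j\<in>J. query_magnitude X j \<psi>)
      = (\<Sum>j\<in>J. \<Sum>x\<in>{x\<in>{x\<in>X. fst x \<in> J}. fst x = j}. (cmod (\<psi> x))\<^sup>2)"
    unfolding query_magnitude_def by (intro sum.cong refl) auto
  also have "\<dots> = (\<Sum>x\<in>{x\<in>X. fst x \<in> J}. (cmod (\<psi> x))\<^sup>2)"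
    using assms by (intro sum.group) auto
  also have "\<dots> \<le> norm2_on X \<psi>" unfolding norm2_on_def using assms by (intro sum_mono2) auto
  finally show ?thesis .
qed

lemma inner_on_apply_op:
  assumes fin: "finite X" and un: "unitary_on X U"
  shows "inner_on X (apply_op X U \<psi>) (apply_op X U \<phi>) = inner_on X \<psi> \<phi>"
proof -
  have "inner_on X (apply_op X U \<psi>) (apply_op X U \<phi>)
      = (\<Sum>x\<in>X. \<Sum>z\<in>X. \<Sum>y\<in>X. \<psi> y * cnj (\<phi> z) * (cnj (U x z) * U x y))"
    by (simp add: inner_on_def apply_op_def sum_distrib_left sum_distrib_right mult_ac)
  also have "\<dots> = (\<Sum>y\<in>X. \<Sum>z\<in>X. \<Sum>x\<in>X. \<psi> y * cnj (\<phi> z) * (cnj (U x z) * U x y))"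
    by (subst sum.swap, subst (2) sum.swap, subst sum.swap) (rule refl)
  also have "\<dots> = (\<Sum>y\<in>X. \<Sum>z\<in>X. \<psi> y * cnj (\<phi> z) * (if z = y then 1 else 0))"
    by (simp add: sum_distrib_left[symmetric] unitary_on_columns_orthonormal[OF fin un])
  also have "\<dots> = inner_on X \<psi> \<phi>" using fin by (simp add: inner_on_def if_distrib cong: if_cong)
  finally show ?thesis .
qed

lemma norm2_on_apply_op:
  assumes "finite X" "unitary_on X U"
  shows "norm2_on X (apply_op X U \<psi>) = norm2_on X \<psi>"
  using inner_on_apply_op[OF assms, of \<psi> \<psi>] by (simp add: inner_on_self)

section \<open>Oracle queries\<close>

definition oracle_inv :: "nat \<Rightarrow> nat \<Rightarrow> rle \<Rightarrow> basis \<Rightarrow> basis" where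
  "oracle_inv dc dr S = (\<lambda>(i, c, r, w).
     (i, (c + (dc - fst (S ! i))) mod dc, (r + (dr - snd (S ! i))) mod dr, w))"

definition fits_registers :: "nat \<Rightarrow> nat \<Rightarrow> nat \<Rightarrow> rle \<Rightarrow> bool" where
  "fits_registers n dc dr S \<longleftrightarrow> (\<forall>i<n. fst (S ! i) < dc \<and> snd (S ! i) < dr)"

lemma fits_registers_if_valid_rle: "valid_rle dc dr S \<Longrightarrow> length S = n \<Longrightarrow> fits_registers n dc dr S"
  by (auto simp: valid_rle_def fits_registers_def)

lemma mod_add_mod_add_cancel:
  fixes c d :: nat
  assumes "c < d" "a + b = d"
  shows "((c + a) mod d + b) mod d = c"
proof -
  have "((c + a) mod d + b) mod d = (c + d) mod d" using assms(2) by (simp add: mod_add_left_eq add.assoc)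
  then show ?thesis using assms(1) by simp
qed

lemma mem_basis_set: "(i, c, r, w) \<in> basis_set n dc dr m \<longleftrightarrow> i < n \<and> c < dc \<and> r < dr \<and> w < m"
  by (auto simp: basis_set_def)

lemma finite_basis_set: "finite (basis_set n dc dr m)"
  by (simp add: basis_set_def)

lemma fst_oracle_inv [simp]: "fst (oracle_inv dc dr S x) = fst x"
  by (cases x) (auto simp: oracle_inv_def)

context
  fixes n dc dr m :: nat and S :: rle
  assumes fits: "fits_registers n dc dr S"
begin

lemma oracle_inv_in_basis_set: "x \<in> basis_set n dc dr m \<Longrightarrow> oracle_inv dc dr S x \<in> basis_set n dc dr m"
  by (cases x) (auto simp: oracle_inv_def mem_basis_set)

lemma oracle_map_in_basis_set: "x \<in> basis_set n dc dr m \<Longrightarrow> oracle_map dc dr S x \<in> basis_set n dc dr m"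
  by (cases x) (auto simp: oracle_map_def mem_basis_set)

lemma oracle_map_oracle_inv: "x \<in> basis_set n dc dr m \<Longrightarrow> oracle_map dc dr S (oracle_inv dc dr S x) = x"
  using fits by (cases x) (auto simp: oracle_inv_def oracle_map_def mem_basis_set fits_registers_def
      intro!: mod_add_mod_add_cancel)

lemma oracle_inv_oracle_map: "x \<in> basis_set n dc dr m \<Longrightarrow> oracle_inv dc dr S (oracle_map dc dr S x) = x"
  using fits by (cases x) (auto simp: oracle_inv_def oracle_map_def mem_basis_set fits_registers_def
      intro!: mod_add_mod_add_cancel)

lemma apply_oracle_eq:
  assumes x: "x \<in> basis_set n dc dr m"
  shows "apply_oracle (basis_set n dc dr m) dc dr S \<psi> x = \<psi> (oracle_inv dc dr S x)"
proof -
  let ?X = "basis_set n dc dr m"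
  have "oracle_map dc dr S y = x \<longleftrightarrow> y = oracle_inv dc dr S x" if "y \<in> ?X" for y
    using oracle_map_oracle_inv[OF x] oracle_inv_oracle_map[OF that] by metis
  then have "apply_oracle ?X dc dr S \<psi> x = (\<Sum>y\<in>?X. if y = oracle_inv dc dr S x then \<psi> y else 0)"
    unfolding apply_oracle_def by (intro sum.cong) auto
  also have "\<dots> = \<psi> (oracle_inv dc dr S x)"
    using oracle_inv_in_basis_set[OF x] finite_basis_set by simp
  finally show ?thesis .
qed

lemma sum_oracle_inv_query_blocks:
  "(\<Sum>x\<in>{x\<in>basis_set n dc dr m. P (fst x)}. f (oracle_inv dc dr S x))
     = (\<Sum>x\<in>{x\<in>basis_set n dc dr m. P (fst x)}. f x)"
  by (rule sum.reindex_bij_witness[where i = "oracle_map dc dr S" and j = "oracle_inv dc dr S"])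
    (auto simp: oracle_map_oracle_inv oracle_inv_oracle_map oracle_inv_in_basis_set
      oracle_map_in_basis_set, auto simp: oracle_map_def split: prod.splits)

lemma query_magnitude_oracle_inv:
  "(\<Sum>x\<in>{x\<in>basis_set n dc dr m. fst x = j}. (cmod (\<psi> (oracle_inv dc dr S x)))\<^sup>2)
     = query_magnitude (basis_set n dc dr m) j \<psi>"
  unfolding query_magnitude_def by (rule sum_oracle_inv_query_blocks)

lemma inner_on_apply_oracle:
  "inner_on (basis_set n dc dr m) (apply_oracle (basis_set n dc dr m) dc dr S \<psi>)
     (apply_oracle (basis_set n dc dr m) dc dr S \<phi>) = inner_on (basis_set n dc dr m) \<psi> \<phi>"
  using sum_oracle_inv_query_blocks[where P = "\<lambda>_. True" and f = "\<lambda>y. \<psi> y * cnj (\<phi> y)"]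
  by (simp add: inner_on_def apply_oracle_eq cong: sum.cong)

lemma norm2_on_apply_oracle:
  "norm2_on (basis_set n dc dr m) (apply_oracle (basis_set n dc dr m) dc dr S \<psi>)
     = norm2_on (basis_set n dc dr m) \<psi>"
  using inner_on_apply_oracle[of \<psi> \<psi>] by (simp add: inner_on_self)

end

lemma inner_on_apply_oracle_diff:
  assumes fits: "fits_registers n dc dr S" "fits_registers n dc dr S'"
    and agree: "\<And>i. i < n \<Longrightarrow> i \<noteq> j \<Longrightarrow> S ! i = S' ! i"
  shows "inner_on (basis_set n dc dr m) (apply_oracle (basis_set n dc dr m) dc dr S \<psi>)
           (apply_oracle (basis_set n dc dr m) dc dr S' \<phi>) - inner_on (basis_set n dc dr m) \<psi> \<phi>
    = (\<Sum>x\<in>{x\<in>basis_set n dc dr m. fst x = j}.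
         \<psi> (oracle_inv dc dr S x) * (cnj (\<phi> (oracle_inv dc dr S' x)) - cnj (\<phi> (oracle_inv dc dr S x))))"
proof -
  let ?X = "basis_set n dc dr m"
  let ?g = "oracle_inv dc dr S" and ?g' = "oracle_inv dc dr S'"
  have same_off_j: "?g' x = ?g x" if "x \<in> ?X" "fst x \<noteq> j" for x
    using agree that by (cases x) (auto simp: oracle_inv_def mem_basis_set)
  have "inner_on ?X \<psi> \<phi> = inner_on ?X (apply_oracle ?X dc dr S \<psi>) (apply_oracle ?X dc dr S \<phi>)"
    by (rule inner_on_apply_oracle[OF fits(1), symmetric])
  then have "inner_on ?X (apply_oracle ?X dc dr S \<psi>) (apply_oracle ?X dc dr S' \<phi>) - inner_on ?X \<psi> \<phi>
      = (\<Sum>x\<in>?X. \<psi> (?g x) * (cnj (\<phi> (?g' x)) - cnj (\<phi> (?g x))))"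
    by (simp add: inner_on_def sum_subtractf[symmetric] apply_oracle_eq[OF fits(1)]
        apply_oracle_eq[OF fits(2)] algebra_simps cong: sum.cong)
  also have "\<dots> = (\<Sum>x\<in>{x\<in>?X. fst x = j}. \<psi> (?g x) * (cnj (\<phi> (?g' x)) - cnj (\<phi> (?g x))))"
    using finite_basis_set by (intro sum.mono_neutral_right) (auto simp: same_off_j)
  finally show ?thesis .
qed

lemma cmod_inner_on_apply_oracle_diff_le:
  assumes fits: "fits_registers n dc dr S" "fits_registers n dc dr S'"
    and agree: "\<And>i. i < n \<Longrightarrow> i \<noteq> j \<Longrightarrow> S ! i = S' ! i"
  shows "cmod (inner_on (basis_set n dc dr m) (apply_oracle (basis_set n dc dr m) dc dr S \<psi>)
                 (apply_oracle (basis_set n dc dr m) dc dr S' \<phi>) - inner_on (basis_set n dc dr m) \<psi> \<phi>)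
         \<le> query_magnitude (basis_set n dc dr m) j \<psi> + query_magnitude (basis_set n dc dr m) j \<phi>"
proof -
  let ?X = "basis_set n dc dr m" and ?F = "{x\<in>basis_set n dc dr m. fst x = j}"
  let ?g = "oracle_inv dc dr S" and ?g' = "oracle_inv dc dr S'"
  have "cmod (\<Sum>x\<in>?F. \<psi> (?g x) * (cnj (\<phi> (?g' x)) - cnj (\<phi> (?g x))))
      \<le> (\<Sum>x\<in>?F. cmod (\<psi> (?g x)) * cmod (\<phi> (?g' x)) + cmod (\<psi> (?g x)) * cmod (\<phi> (?g x)))"
  proof (rule order_trans[OF norm_sum sum_mono])
    fix x
    have "cmod (cnj (\<phi> (?g' x)) - cnj (\<phi> (?g x))) \<le> cmod (\<phi> (?g' x)) + cmod (\<phi> (?g x))"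
      using norm_triangle_ineq4[of "cnj (\<phi> (?g' x))" "cnj (\<phi> (?g x))"] by simp
    then show "cmod (\<psi> (?g x) * (cnj (\<phi> (?g' x)) - cnj (\<phi> (?g x))))
        \<le> cmod (\<psi> (?g x)) * cmod (\<phi> (?g' x)) + cmod (\<psi> (?g x)) * cmod (\<phi> (?g x))"
      by (simp add: norm_mult mult_left_mono flip: distrib_left)
  qed
  also have "\<dots> \<le> (\<Sum>x\<in>?F. (cmod (\<psi> (?g x)))\<^sup>2
                 + ((cmod (\<phi> (?g' x)))\<^sup>2 + (cmod (\<phi> (?g x)))\<^sup>2) / 2)"
  proof (rule sum_mono)
    fix x
    show "cmod (\<psi> (?g x)) * cmod (\<phi> (?g' x)) + cmod (\<psi> (?g x)) * cmod (\<phi> (?g x))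
        \<le> (cmod (\<psi> (?g x)))\<^sup>2 + ((cmod (\<phi> (?g' x)))\<^sup>2 + (cmod (\<phi> (?g x)))\<^sup>2) / 2"
      using sum_squares_bound[of "cmod (\<psi> (?g x))" "cmod (\<phi> (?g' x))"]
        sum_squares_bound[of "cmod (\<psi> (?g x))" "cmod (\<phi> (?g x))"] by argo
  qed
  also have "\<dots> = query_magnitude ?X j \<psi> + query_magnitude ?X j \<phi>"
    by (simp add: sum.distrib add_divide_distrib query_magnitude_oracle_inv[OF fits(1)]
        query_magnitude_oracle_inv[OF fits(2)] flip: sum_divide_distrib)
  finally show ?thesis by (simp only: inner_on_apply_oracle_diff[OF fits agree])
qed

lemma norm2_on_init_state: "(0, 0, 0, 0) \<in> X \<Longrightarrow> finite X \<Longrightarrow> norm2_on X init_state = 1"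
  unfolding norm2_on_def init_state_def
  by (simp add: if_distrib[of "\<lambda>z. (cmod z)\<^sup>2"] cong: if_cong)

lemma norm2_on_run_alg:
  assumes fits: "fits_registers n dc dr A" "fits_registers n dc dr B"
    and un: "\<forall>t\<le>T. unitary_on (basis_set n dc dr m) (U t)"
    and init: "(0, 0, 0, 0) \<in> basis_set n dc dr m"
  shows "t \<le> T \<Longrightarrow> norm2_on (basis_set n dc dr m) (run_alg n dc dr m U sel A B t) = 1"
proof (induction t)
  case 0
  then show ?case
    using un norm2_on_apply_op[OF finite_basis_set] norm2_on_init_state[OF init finite_basis_set]
    by simp
next
  case (Suc t)
  have "fits_registers n dc dr (if sel t then B else A)" using fits by simp
  then show ?case
    using Suc un norm2_on_apply_op[OF finite_basis_set] norm2_on_apply_oracle by simp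
qed

lemma cmod_inner_on_run_alg_Suc_ge:
  fixes sel :: "nat \<Rightarrow> bool"
  assumes un: "unitary_on (basis_set n dc dr m) (U (Suc t))"
    and fits: "fits_registers n dc dr A" "fits_registers n dc dr B"
      "fits_registers n dc dr A'" "fits_registers n dc dr B'"
    and agree: "\<And>i. i < n \<Longrightarrow> i \<noteq> j \<Longrightarrow> A ! i = A' ! i"
      "\<And>i. i < n \<Longrightarrow> i \<noteq> j \<Longrightarrow> B ! i = B' ! i"
  defines "X \<equiv> basis_set n dc dr m"
    and "\<psi> \<equiv> run_alg n dc dr m U sel A B" and "\<phi> \<equiv> run_alg n dc dr m U sel A' B'"
  shows "cmod (inner_on X (\<psi> t) (\<phi> t)) - (query_magnitude X j (\<psi> t) + query_magnitude X j (\<phi> t))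
       \<le> cmod (inner_on X (\<psi> (Suc t)) (\<phi> (Suc t)))"
proof -
  let ?S = "if sel t then B else A" and ?S' = "if sel t then B' else A'"
  have "inner_on X (\<psi> (Suc t)) (\<phi> (Suc t))
      = inner_on X (apply_oracle X dc dr ?S (\<psi> t)) (apply_oracle X dc dr ?S' (\<phi> t))"
    using inner_on_apply_op[OF finite_basis_set un] by (simp add: X_def \<psi>_def \<phi>_def)
  moreover have "cmod (inner_on X (apply_oracle X dc dr ?S (\<psi> t)) (apply_oracle X dc dr ?S' (\<phi> t))
          - inner_on X (\<psi> t) (\<phi> t))
      \<le> query_magnitude X j (\<psi> t) + query_magnitude X j (\<phi> t)"
    unfolding X_def using fits agree by (intro cmod_inner_on_apply_oracle_diff_le) auto
  ultimately show ?thesis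
    using norm_triangle_ineq2[of "inner_on X (\<psi> t) (\<phi> t)" "inner_on X (\<psi> (Suc t)) (\<phi> (Suc t))"]
    by (simp add: norm_minus_commute)
qed

lemma cmod_inner_on_le_if_separated:
  assumes fin: "finite X" and norm: "norm2_on X \<psi> = 1" "norm2_on X \<phi> = 1"
    and G: "G0 \<subseteq> X" "G1 \<subseteq> X" "G0 \<inter> G1 = {}"
    and mass: "2/3 \<le> (\<Sum>x\<in>G0. (cmod (\<psi> x))\<^sup>2)" "2/3 \<le> (\<Sum>x\<in>G1. (cmod (\<phi> x))\<^sup>2)"
  shows "cmod (inner_on X \<psi> \<phi>) \<le> 17/18"
proof -
  define A0 where "A0 = (\<Sum>x\<in>G0. (cmod (\<psi> x))\<^sup>2)"
  define A1 where "A1 = (\<Sum>x\<in>X - G0. (cmod (\<psi> x))\<^sup>2)"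
  define B0 where "B0 = (\<Sum>x\<in>G0. (cmod (\<phi> x))\<^sup>2)"
  define B1 where "B1 = (\<Sum>x\<in>X - G0. (cmod (\<phi> x))\<^sup>2)"
  have A: "A0 + A1 = 1"
    using norm(1) sum.subset_diff[OF G(1) fin, of "\<lambda>x. (cmod (\<psi> x))\<^sup>2"]
    by (simp add: A0_def A1_def norm2_on_def)
  have B: "B0 + B1 = 1"
    using norm(2) sum.subset_diff[OF G(1) fin, of "\<lambda>x. (cmod (\<phi> x))\<^sup>2"]
    by (simp add: B0_def B1_def norm2_on_def)
  have "(\<Sum>x\<in>G1. (cmod (\<phi> x))\<^sup>2) \<le> B1"
    unfolding B1_def using G fin by (intro sum_mono2) auto
  with mass have B1: "2/3 \<le> B1" by linarith
  \<comment> \<open>weighted AM-GM, with the small weight on the part where each state is concentrated\<close>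
  have amgm: "a * b \<le> 3/8 * a\<^sup>2 + 2/3 * b\<^sup>2" for a b :: real
    using zero_le_power2[of "3/4 * a - b"] by (simp add: power2_eq_square algebra_simps)
  have "cmod (inner_on X \<psi> \<phi>) \<le> (\<Sum>x\<in>X. cmod (\<psi> x) * cmod (\<phi> x))"
    unfolding inner_on_def using norm_sum[of "\<lambda>x. \<psi> x * cnj (\<phi> x)" X] by (simp add: norm_mult)
  also have "\<dots> = (\<Sum>x\<in>G0. cmod (\<psi> x) * cmod (\<phi> x)) + (\<Sum>x\<in>X - G0. cmod (\<psi> x) * cmod (\<phi> x))"
    using sum.subset_diff[OF G(1) fin] by (simp add: add.commute)
  also have "\<dots> \<le> (\<Sum>x\<in>G0. 3/8 * (cmod (\<psi> x))\<^sup>2 + 2/3 * (cmod (\<phi> x))\<^sup>2)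
                + (\<Sum>x\<in>X - G0. 2/3 * (cmod (\<psi> x))\<^sup>2 + 3/8 * (cmod (\<phi> x))\<^sup>2)"
    by (intro add_mono sum_mono amgm) (subst mult.commute, subst add.commute, rule amgm)
  also have "\<dots> = 3/8 * A0 + 2/3 * B0 + (2/3 * A1 + 3/8 * B1)"
    by (simp add: A0_def A1_def B0_def B1_def sum.distrib sum_distrib_left)
  also have "\<dots> \<le> 17/18" using A B B1 mass(1) unfolding A0_def[symmetric] by linarith
  finally show ?thesis .
qed

lemma success_prob_le_mass:
  assumes "\<And>ans. lcs_rle_correct A B ans \<Longrightarrow> P ans"
  shows "success_prob n dc dr m U sel out T A B
     \<le> (\<Sum>x\<in>{x\<in>basis_set n dc dr m. P (out x)}. (cmod (run_alg n dc dr m U sel A B T x))\<^sup>2)"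
proof -
  have "success_prob n dc dr m U sel out T A B
     \<le> (\<Sum>x\<in>basis_set n dc dr m. if P (out x) then (cmod (run_alg n dc dr m U sel A B T x))\<^sup>2 else 0)"
    unfolding success_prob_def using assms by (intro sum_mono) auto
  then show ?thesis using finite_basis_set by (simp add: sum.inter_filter)
qed

lemma cmod_inner_on_run_alg_le_if_answers_differ:
  fixes sel :: "nat \<Rightarrow> bool"
  assumes fits: "fits_registers n dc dr A" "fits_registers n dc dr B"
      "fits_registers n dc dr A'" "fits_registers n dc dr B'"
    and un: "\<forall>t\<le>T. unitary_on (basis_set n dc dr m) (U t)"
    and init: "(0, 0, 0, 0) \<in> basis_set n dc dr m"
    and success: "2/3 \<le> success_prob n dc dr m U sel out T A B"
      "2/3 \<le> success_prob n dc dr m U sel out T A' B'"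
    and answers: "\<And>ans. lcs_rle_correct A B ans \<Longrightarrow> P ans"
      "\<And>ans. lcs_rle_correct A' B' ans \<Longrightarrow> \<not> P ans"
  shows "cmod (inner_on (basis_set n dc dr m)
           (run_alg n dc dr m U sel A B T) (run_alg n dc dr m U sel A' B' T)) \<le> 17/18"
proof (rule cmod_inner_on_le_if_separated[OF finite_basis_set])
  show "norm2_on (basis_set n dc dr m) (run_alg n dc dr m U sel A B T) = 1"
    "norm2_on (basis_set n dc dr m) (run_alg n dc dr m U sel A' B' T) = 1"
    using norm2_on_run_alg[OF _ _ un init] fits by auto
  show "2/3 \<le> (\<Sum>x\<in>{x\<in>basis_set n dc dr m. P (out x)}. (cmod (run_alg n dc dr m U sel A B T x))\<^sup>2)"
    using success(1) success_prob_le_mass[OF answers(1)] by (rule order_trans)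
  show "2/3 \<le> (\<Sum>x\<in>{x\<in>basis_set n dc dr m. \<not> P (out x)}.
                 (cmod (run_alg n dc dr m U sel A' B' T x))\<^sup>2)"
    using success(2) success_prob_le_mass[OF answers(2)] by (rule order_trans)
qed auto

section \<open>The adversary bound for threshold functions\<close>

lemma sum_subsets_insert:
  assumes "finite K"
  shows "(\<Sum>Z\<in>{Z. Z \<subseteq> K \<and> card Z = h}. \<Sum>j\<in>K - Z. F (insert j Z) j)
       = (\<Sum>Y\<in>{Y. Y \<subseteq> K \<and> card Y = Suc h}. \<Sum>j\<in>Y. F Y j)"
proof -
  let ?Xs = "{Z. Z \<subseteq> K \<and> card Z = h}" and ?Ys = "{Y. Y \<subseteq> K \<and> card Y = Suc h}"
  have fin_subsets: "finite {Z. Z \<subseteq> K \<and> P Z}" for P using assms by simp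
  have "(\<Sum>Z\<in>?Xs. \<Sum>j\<in>K - Z. F (insert j Z) j) = (\<Sum>(Z, j)\<in>Sigma ?Xs (\<lambda>Z. K - Z). F (insert j Z) j)"
    using fin_subsets assms by (intro sum.Sigma) auto
  also have "\<dots> = (\<Sum>(Y, j)\<in>Sigma ?Ys (\<lambda>Y. Y). F Y j)"
  proof (rule sum.reindex_bij_witness[where i = "\<lambda>(Y, j). (Y - {j}, j)" and j = "\<lambda>(Z, j). (insert j Z, j)"])
    fix a assume "a \<in> Sigma ?Xs (\<lambda>Z. K - Z)"
    moreover obtain Z j where "a = (Z, j)" by (cases a)
    moreover have "finite Z" if "Z \<subseteq> K" using that assms finite_subset by blast
    ultimately show "(\<lambda>(Y, j). (Y - {j}, j)) ((\<lambda>(Z, j). (insert j Z, j)) a) = a"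
      and "(\<lambda>(Z, j). (insert j Z, j)) a \<in> Sigma ?Ys (\<lambda>Y. Y)"
      and "(case (\<lambda>(Z, j). (insert j Z, j)) a of (Y, j) \<Rightarrow> F Y j) = (case a of (Z, j) \<Rightarrow> F (insert j Z) j)"
      by auto
  next
    fix b assume "b \<in> Sigma ?Ys (\<lambda>Y. Y)"
    moreover obtain Y j where "b = (Y, j)" by (cases b)
    moreover have "finite Y" if "Y \<subseteq> K" using that assms finite_subset by blast
    ultimately show "(\<lambda>(Z, j). (insert j Z, j)) ((\<lambda>(Y, j). (Y - {j}, j)) b) = b"
      and "(\<lambda>(Y, j). (Y - {j}, j)) b \<in> Sigma ?Xs (\<lambda>Z. K - Z)"
      by auto
  qed
  also have "\<dots> = (\<Sum>Y\<in>?Ys. \<Sum>j\<in>Y. F Y j)"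
    using fin_subsets assms by (intro sum.Sigma[symmetric]) (auto intro: finite_subset)
  finally show ?thesis .
qed

lemma sum_edge_query_magnitudes_le:
  fixes \<psi> :: "'k set \<Rightarrow> 'k \<times> 'w \<Rightarrow> complex"
  assumes fin: "finite X" "finite K" and norm: "\<And>Z. Z \<subseteq> K \<Longrightarrow> norm2_on X (\<psi> Z) = 1"
  shows "(\<Sum>Z\<in>{Z. Z \<subseteq> K \<and> card Z = h}. \<Sum>j\<in>K - Z.
            query_magnitude X j (\<psi> Z) + query_magnitude X j (\<psi> (insert j Z)))
       \<le> real (card {Z. Z \<subseteq> K \<and> card Z = h}) + real (card {Y. Y \<subseteq> K \<and> card Y = Suc h})"
proof -
  have le_one: "(\<Sum>j\<in>J. query_magnitude X j (\<psi> Z)) \<le> 1" if "Z \<subseteq> K" "J \<subseteq> K" for Z J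
    using sum_query_magnitude_le[OF fin(1) finite_subset[OF that(2) fin(2)], where \<psi> = "\<psi> Z"]
      norm[OF that(1)] by simp
  have "(\<Sum>Z\<in>{Z. Z \<subseteq> K \<and> card Z = h}. \<Sum>j\<in>K - Z. query_magnitude X j (\<psi> Z))
      \<le> (\<Sum>Z\<in>{Z. Z \<subseteq> K \<and> card Z = h}. 1)"
    using le_one by (intro sum_mono) auto
  moreover have "(\<Sum>Z\<in>{Z. Z \<subseteq> K \<and> card Z = h}. \<Sum>j\<in>K - Z. query_magnitude X j (\<psi> (insert j Z)))
      = (\<Sum>Y\<in>{Y. Y \<subseteq> K \<and> card Y = Suc h}. \<Sum>j\<in>Y. query_magnitude X j (\<psi> Y))"
    by (rule sum_subsets_insert[OF fin(2)])
  moreover have "\<dots> \<le> (\<Sum>Y\<in>{Y. Y \<subseteq> K \<and> card Y = Suc h}. 1)"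
    using le_one by (intro sum_mono) auto
  ultimately show ?thesis by (simp add: sum.distrib)
qed

definition edge_potential :: "'a set \<Rightarrow> 'k set \<Rightarrow> nat \<Rightarrow> ('k set \<Rightarrow> 'a \<Rightarrow> complex) \<Rightarrow> real" where
  "edge_potential X K h \<psi> =
     (\<Sum>Z\<in>{Z. Z \<subseteq> K \<and> card Z = h}. \<Sum>j\<in>K - Z. cmod (inner_on X (\<psi> Z) (\<psi> (insert j Z))))"

lemma sum_edges_const:
  assumes "finite K"
  shows "(\<Sum>Z\<in>{Z. Z \<subseteq> K \<and> card Z = h}. \<Sum>j\<in>K - Z. c) = c * real ((card K choose h) * (card K - h))"
proof -
  have "(\<Sum>Z\<in>{Z. Z \<subseteq> K \<and> card Z = h}. \<Sum>j\<in>K - Z. c) = (\<Sum>Z\<in>{Z. Z \<subseteq> K \<and> card Z = h}. c * real (card K - h))"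
    using assms by (intro sum.cong) (auto simp: card_Diff_subset finite_subset)
  then show ?thesis using n_subsets[OF assms, of h] by simp
qed

lemma edge_potential_le:
  assumes "finite K"
    and "\<And>Z j. Z \<subseteq> K \<Longrightarrow> card Z = h \<Longrightarrow> j \<in> K - Z \<Longrightarrow> cmod (inner_on X (\<psi> Z) (\<psi> (insert j Z))) \<le> c"
  shows "edge_potential X K h \<psi> \<le> c * real ((card K choose h) * (card K - h))"
  unfolding edge_potential_def sum_edges_const[OF assms(1), symmetric]
  using assms(2) by (intro sum_mono) auto

lemma edge_potential_const:
  assumes "finite K" and "\<And>Z. Z \<subseteq> K \<Longrightarrow> \<psi> Z = \<phi>" and "norm2_on X \<phi> = 1"
  shows "edge_potential X K h \<psi> = real ((card K choose h) * (card K - h))"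
proof -
  have "edge_potential X K h \<psi> = (\<Sum>Z\<in>{Z. Z \<subseteq> K \<and> card Z = h}. \<Sum>j\<in>K - Z. 1)"
    unfolding edge_potential_def using assms(2,3) by (intro sum.cong refl) (auto simp: inner_on_self)
  then show ?thesis using sum_edges_const[OF assms(1), where c = 1 and h = h] by simp
qed

lemma edge_potential_step:
  fixes \<psi> \<phi> :: "'k set \<Rightarrow> 'k \<times> 'w \<Rightarrow> complex"
  assumes fin: "finite X" "finite K" and norm: "\<And>Z. Z \<subseteq> K \<Longrightarrow> norm2_on X (\<psi> Z) = 1"
    and step: "\<And>Z j. Z \<subseteq> K \<Longrightarrow> card Z = h \<Longrightarrow> j \<in> K - Z \<Longrightarrow>
      cmod (inner_on X (\<psi> Z) (\<psi> (insert j Z)))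
        - (query_magnitude X j (\<psi> Z) + query_magnitude X j (\<psi> (insert j Z)))
      \<le> cmod (inner_on X (\<phi> Z) (\<phi> (insert j Z)))"
  shows "edge_potential X K h \<psi> - real ((card K choose h) + (card K choose Suc h)) \<le> edge_potential X K h \<phi>"
proof -
  have "edge_potential X K h \<psi> - real ((card K choose h) + (card K choose Suc h))
      \<le> edge_potential X K h \<psi> - (\<Sum>Z\<in>{Z. Z \<subseteq> K \<and> card Z = h}. \<Sum>j\<in>K - Z.
            query_magnitude X j (\<psi> Z) + query_magnitude X j (\<psi> (insert j Z)))"
    using sum_edge_query_magnitudes_le[OF fin, where \<psi> = \<psi> and h = h, OF norm]
      n_subsets[OF fin(2), of h] n_subsets[OF fin(2), of "Suc h"] by simp
  also have "\<dots> \<le> edge_potential X K h \<phi>"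
    unfolding edge_potential_def sum_subtractf[symmetric] using step by (intro sum_mono) auto
  finally show ?thesis .
qed

lemma threshold_adversary_bound:
  fixes \<psi> :: "'k set \<Rightarrow> nat \<Rightarrow> 'k \<times> 'w \<Rightarrow> complex" and \<epsilon> :: real
  assumes fin: "finite X" "finite K" and h: "h < card K"
    and norm: "\<And>Z t. Z \<subseteq> K \<Longrightarrow> t \<le> T \<Longrightarrow> norm2_on X (\<psi> Z t) = 1"
    and start: "\<And>Z. Z \<subseteq> K \<Longrightarrow> \<psi> Z 0 = \<psi> {} 0"
    and step: "\<And>Z j t. Z \<subseteq> K \<Longrightarrow> card Z = h \<Longrightarrow> j \<in> K - Z \<Longrightarrow> Suc t \<le> T \<Longrightarrow>
        cmod (inner_on X (\<psi> Z t) (\<psi> (insert j Z) t))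
          - (query_magnitude X j (\<psi> Z t) + query_magnitude X j (\<psi> (insert j Z) t))
        \<le> cmod (inner_on X (\<psi> Z (Suc t)) (\<psi> (insert j Z) (Suc t)))"
    and final: "\<And>Z j. Z \<subseteq> K \<Longrightarrow> card Z = h \<Longrightarrow> j \<in> K - Z \<Longrightarrow>
        cmod (inner_on X (\<psi> Z T) (\<psi> (insert j Z) T)) \<le> 1 - \<epsilon>"
  shows "\<epsilon> * real (card K - h) * real (h + 1) \<le> real (card K + 1) * real T"
proof -
  define N where "N = card K"
  define W where "W t = edge_potential X K h (\<lambda>Z. \<psi> Z t)" for t
  define E F where "E = (N choose h) * (N - h)" and "F = (N choose h) + (N choose Suc h)"
  have W_0: "W 0 = real E"
    unfolding W_def E_def N_def using fin(2) start norm[of "{}" 0] by (rule edge_potential_const) auto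
  have W_Suc: "W t - real F \<le> W (Suc t)" if "Suc t \<le> T" for t
    unfolding W_def F_def N_def using fin norm that step by (intro edge_potential_step) auto
  have decay: "W 0 - real t * real F \<le> W t" if "t \<le> T" for t
    using that
  proof (induction t)
    case (Suc t)
    then show ?case using W_Suc[of t] by (simp add: ring_distribs)
  qed simp
  have "W T \<le> (1 - \<epsilon>) * real E"
    unfolding W_def E_def N_def using fin(2) final by (rule edge_potential_le)
  then have "\<epsilon> * real E \<le> real T * real F" using decay[OF order_refl] W_0 by argo
  \<comment> \<open>double counting of the pairs (Z, insert j Z)\<close>
  have "(N choose Suc h) * (h + 1) = (N choose h) * (N - h)"
    by (metis binomial_absorb_comp binomial_absorption mult.commute Suc_eq_plus1)
  then have count: "F * (h + 1) = (N choose h) * (N + 1)"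
    using h by (simp add: F_def N_def algebra_simps flip: add_mult_distrib2)
  have "real (N choose h) * (\<epsilon> * real (N - h) * real (h + 1)) = \<epsilon> * real E * real (h + 1)"
    by (simp add: E_def)
  also have "\<dots> \<le> real T * real F * real (h + 1)"
    using \<open>\<epsilon> * real E \<le> real T * real F\<close> by (rule mult_right_mono) simp
  also have "\<dots> = real (N choose h) * (real (N + 1) * real T)"
    by (simp only: mult.assoc count flip: of_nat_mult) (simp add: algebra_simps)
  finally show ?thesis using h by (simp add: N_def)
qed

section \<open>Hard instances\<close>

lemma decode_Nil [simp]: "decode [] = []"
  by (simp add: decode_def)

lemma decode_Cons [simp]: "decode (x # xs) = replicate (snd x) (fst x) @ decode xs"
  by (cases x) (simp add: decode_def)

lemma decode_append [simp]: "decode (xs @ ys) = decode xs @ decode ys"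
  by (simp add: decode_def)

lemma length_decode: "length (decode S) = sum_list (map snd S)"
  by (induction S) auto

lemma set_decode_subset: "set (decode S) \<subseteq> fst ` set S"
  by (induction S) auto

lemma occurs_at_nth: "occurs_at u D p \<Longrightarrow> i < length u \<Longrightarrow> u ! i = D ! (p + i)"
  unfolding occurs_at_def by (metis add_leD1 le_add_diff_inverse nth_drop nth_take)

lemma set_subset_if_occurs_at: "occurs_at u D p \<Longrightarrow> set u \<subseteq> set D"
  unfolding occurs_at_def by (metis set_drop_subset set_take_subset subset_trans)

lemma occurs_at_middle: "occurs_at u (P @ u @ R) (length P)"
  by (simp add: occurs_at_def)

lemma occurs_at_prefix: "occurs_at u (u @ R) 0"
  by (simp add: occurs_at_def)

lemma occurs_at_between_separators:
  assumes D: "D = P @ [a] @ Q @ R" and a: "a \<notin> C" and R: "set R \<inter> C = {}"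
    and u: "set u \<subseteq> C" "u \<noteq> []" and occ: "occurs_at u D p"
  shows "p + length u \<le> length P \<or> (length P < p \<and> p + length u \<le> length P + 1 + length Q)"
proof -
  have covered: "D ! i \<in> C" if "p \<le> i" "i < p + length u" for i
    using occurs_at_nth[OF occ, of "i - p"] that u(1) nth_mem[of "i - p" u] by auto
  have len: "p + length u \<le> length D" using occ by (simp add: occurs_at_def)
  have "\<not> (p \<le> length P \<and> length P < p + length u)"
    using covered[of "length P"] D a by (auto simp: nth_append)
  moreover have "p + length u \<le> length P + 1 + length Q"
  proof (rule ccontr)
    assume "\<not> ?thesis"
    then have "D ! (p + length u - 1) \<in> set R"
      using D len by (auto simp: nth_append)
    moreover have "D ! (p + length u - 1) \<in> C" using u(2) by (intro covered) (auto simp: neq_Nil_conv)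
    ultimately show False using R by blast
  qed
  ultimately show ?thesis by auto
qed

lemma run_start_mono: "i \<le> j \<Longrightarrow> run_start S i \<le> run_start S j"
  unfolding run_start_def by (metis le_add_diff_inverse take_add map_append sum_list_append le_add1)

(* decode (hard_rle n k L a b Z) = 0^e0 1^e1 ... (k-1)^e(k-1) a k^L b a b a ..., where ei = 4 if i
   is in Z and ei = 2 otherwise. *)
definition hard_run :: "nat \<Rightarrow> nat \<Rightarrow> nat \<Rightarrow> nat \<Rightarrow> nat set \<Rightarrow> nat \<Rightarrow> nat \<times> nat" where
  "hard_run k L a b Z i =
     (if i < k then (i, if i \<in> Z then 4 else 2) else if i = k then (a, 1)
      else if i = k + 1 then (k, L) else (if even i then b else a, 1))"

definition hard_rle :: "nat \<Rightarrow> nat \<Rightarrow> nat \<Rightarrow> nat \<Rightarrow> nat \<Rightarrow> nat set \<Rightarrow> rle" where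
  "hard_rle n k L a b Z = map (hard_run k L a b Z) [0..<n]"

definition head_length :: "nat \<Rightarrow> nat set \<Rightarrow> nat" where
  "head_length k Z = (\<Sum>i<k. if i \<in> Z then 4 else 2)"

lemma length_hard_rle [simp]: "length (hard_rle n k L a b Z) = n"
  by (simp add: hard_rle_def)

lemma head_length_eq:
  assumes "Z \<subseteq> {0..<k}"
  shows "head_length k Z = 2 * k + 2 * card Z"
proof -
  have "head_length k Z = (\<Sum>i<k. 2 + (if i \<in> Z then 2 else 0))"
    unfolding head_length_def by (intro sum.cong) auto
  also have "\<dots> = 2 * k + (\<Sum>i\<in>{..<k} \<inter> Z. 2)"
    by (simp only: sum.distrib sum.inter_restrict[OF finite_lessThan]) simp
  also have "{..<k} \<inter> Z = Z" using assms by auto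
  finally show ?thesis by simp
qed

lemma head_length_pos: "0 < k \<Longrightarrow> 0 < head_length k Z"
  unfolding head_length_def by (intro sum_pos) auto

lemma map_hard_run_head: "map (hard_run k L a b Z) [0..<k] = map (hard_run k L' a' b' Z) [0..<k]"
  by (simp add: hard_run_def)

lemma length_decode_hard_head: "length (decode (map (hard_run k L a b Z) [0..<k])) = head_length k Z"
  unfolding length_decode head_length_def
  by (simp add: sum_list_map_eq_sum_count2 hard_run_def atLeast0LessThan comp_def
      flip: sum_set_upt_conv_sum_list_nat)

lemma set_decode_hard_head: "set (decode (map (hard_run k L a b Z) [0..<k])) \<subseteq> {0..<k}"
proof -
  have "fst ` set (map (hard_run k L a b Z) [0..<k]) \<subseteq> {0..<k}" by (auto simp: hard_run_def)
  then show ?thesis using set_decode_subset by blast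
qed

lemma set_decode_hard_tail: "set (decode (map (hard_run k L a b Z) [k+2..<n])) \<subseteq> {a, b}"
proof -
  have "fst ` set (map (hard_run k L a b Z) [k+2..<n]) \<subseteq> {a, b}" by (auto simp: hard_run_def)
  then show ?thesis using set_decode_subset by blast
qed

lemma upt_split_pair:
  assumes "k + 2 \<le> n"
  shows "[0..<n] = [0..<k] @ [k, k + 1] @ [k+2..<n]"
proof -
  have "[0..<n] = [0..<k] @ [k..<n]" using assms upt_add_eq_append[of 0 k "n - k"] by simp
  also have "[k..<n] = [k, k + 1] @ [k+2..<n]" using assms by (simp add: upt_conv_Cons)
  finally show ?thesis .
qed

lemma decode_hard_rle:
  assumes "k + 2 \<le> n"
  shows "decode (hard_rle n k L a b Z)
    = decode (map (hard_run k L a b Z) [0..<k]) @ [a] @ replicate L k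
      @ decode (map (hard_run k L a b Z) [k+2..<n])"
  using upt_split_pair[OF assms] by (simp add: hard_rle_def hard_run_def)

lemma run_start_hard_rle:
  assumes "k + 2 \<le> n"
  shows "run_start (hard_rle n k L a b Z) k = head_length k Z"
    and "run_start (hard_rle n k L a b Z) (Suc k) = head_length k Z + 1"
proof -
  have "take k (hard_rle n k L a b Z) = map (hard_run k L a b Z) [0..<k]"
    and "take (Suc k) (hard_rle n k L a b Z) = map (hard_run k L a b Z) [0..<k] @ [(a, 1)]"
    using upt_split_pair[OF assms] by (simp_all add: hard_rle_def take_map hard_run_def)
  then show "run_start (hard_rle n k L a b Z) k = head_length k Z"
    and "run_start (hard_rle n k L a b Z) (Suc k) = head_length k Z + 1"
    using length_decode_hard_head[of k L a b Z] by (simp_all add: run_start_def length_decode)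
qed

lemma valid_rle_hard_rle:
  assumes "a \<noteq> b" "k < a" "k < b" "a < dc" "b < dc" "4 < dr" "0 < L" "L < dr"
  shows "valid_rle dc dr (hard_rle n k L a b Z)"
  unfolding valid_rle_def
proof (intro conjI allI impI)
  fix i assume "i < length (hard_rle n k L a b Z)"
  then show "fst (hard_rle n k L a b Z ! i) < dc" "0 < snd (hard_rle n k L a b Z ! i)"
    "snd (hard_rle n k L a b Z ! i) < dr"
    using assms by (auto simp: hard_rle_def hard_run_def)
next
  fix i assume "Suc i < length (hard_rle n k L a b Z)"
  then show "fst (hard_rle n k L a b Z ! i) \<noteq> fst (hard_rle n k L a b Z ! Suc i)"
    using assms by (auto simp: hard_rle_def hard_run_def)
qed

lemma hard_rle_insert_nth:
  "i < n \<Longrightarrow> i \<noteq> j \<Longrightarrow> hard_rle n k L a b Z ! i = hard_rle n k L a b (insert j Z) ! i"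
  by (simp add: hard_rle_def hard_run_def)

locale hard_pair =
  fixes n k L :: nat and Z :: "nat set"
  assumes k: "0 < k" "k + 2 \<le> n"
begin

abbreviation "rle_A \<equiv> hard_rle n k L (k + 1) (k + 2) Z"
abbreviation "rle_B \<equiv> hard_rle n k L (k + 3) (k + 4) Z"
abbreviation "shared_head \<equiv> decode (map (hard_run k L (k + 1) (k + 2) Z) [0..<k])"

lemma decode_A:
  "decode rle_A = shared_head @ [k + 1] @ replicate L k @ decode (map (hard_run k L (k + 1) (k + 2) Z) [k+2..<n])"
  using decode_hard_rle[OF k(2)] by simp

lemma decode_B:
  "decode rle_B = shared_head @ [k + 3] @ replicate L k @ decode (map (hard_run k L (k + 3) (k + 4) Z) [k+2..<n])"
  using decode_hard_rle[OF k(2), of L "k + 3" "k + 4" Z]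
  unfolding map_hard_run_head[of k L "k + 3" "k + 4" Z L "k + 1" "k + 2"] by simp

lemma set_decode_B: "set (decode rle_B) \<subseteq> {0..<k} \<union> {k, k + 3, k + 4}"
  using decode_B set_decode_hard_head[of k L "k + 1" "k + 2" Z] set_decode_hard_tail[of k L "k + 3" "k + 4" Z n]
  by auto

lemma common_substr_shared_head: "common_substr rle_A rle_B shared_head"
  unfolding common_substr_def using decode_A decode_B occurs_at_prefix by metis

lemma common_substr_block: "common_substr rle_A rle_B (replicate L k)"
  unfolding common_substr_def using decode_A decode_B occurs_at_middle
  by (metis append.assoc append_Cons append_Nil length_append_singleton)

lemma common_substr_occurs_in_A:
  assumes "common_substr rle_A rle_B u" "u \<noteq> []" and occ: "occurs_at u (decode rle_A) p"
  shows "p + length u \<le> head_length k Z \<or> (head_length k Z < p \<and> p + length u \<le> head_length k Z + 1 + L)"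
proof -
  obtain q where "occurs_at u (decode rle_B) q" using assms(1) by (auto simp: common_substr_def)
  then have u: "set u \<subseteq> set (decode rle_B)" by (rule set_subset_if_occurs_at)
  have "{k + 1, k + 2} \<inter> ({0..<k} \<union> {k, k + 3, k + 4}) = {}" by auto
  then have "set (decode (map (hard_run k L (k + 1) (k + 2) Z) [k+2..<n])) \<inter> set (decode rle_B) = {}"
    using set_decode_B set_decode_hard_tail[of k L "k + 1" "k + 2" Z n] by blast
  moreover have "k + 1 \<notin> set (decode rle_B)" using set_decode_B by auto
  ultimately show ?thesis
    using occurs_at_between_separators[OF decode_A _ _ u assms(2) occ] length_decode_hard_head by simp
qed

lemma correct_start_before_block:
  assumes "L < head_length k Z" and "lcs_rle_correct rle_A rle_B (iA, iB, l)"
  shows "iA < k"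
proof -
  obtain u p where u: "longest_common_substr rle_A rle_B u" and occ: "occurs_at u (decode rle_A) p"
    and start: "starts_in_run rle_A iA p"
    using assms(2) by (auto simp: lcs_rle_correct_def)
  have long: "head_length k Z \<le> length u"
    using u common_substr_shared_head length_decode_hard_head by (auto simp: longest_common_substr_def)
  then have "u \<noteq> []" using head_length_pos[OF k(1), of Z] by auto
  then have p: "p < head_length k Z"
    using common_substr_occurs_in_A[OF _ _ occ] u long assms(1) by (auto simp: longest_common_substr_def)
  show ?thesis
  proof (rule ccontr)
    assume "\<not> iA < k"
    then have "run_start rle_A k \<le> run_start rle_A iA" by (intro run_start_mono) simp
    then show False using start p run_start_hard_rle[OF k(2)] by (auto simp: starts_in_run_def)
  qed
qed

lemma correct_start_after_block:
  assumes "head_length k Z < L" and "lcs_rle_correct rle_A rle_B (iA, iB, l)"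
  shows "k < iA"
proof -
  obtain u p where u: "longest_common_substr rle_A rle_B u" and occ: "occurs_at u (decode rle_A) p"
    and start: "starts_in_run rle_A iA p"
    using assms(2) by (auto simp: lcs_rle_correct_def)
  have long: "L \<le> length u" using u common_substr_block by (auto simp: longest_common_substr_def)
  then have "u \<noteq> []" using assms(1) by auto
  then have p: "head_length k Z < p"
    using common_substr_occurs_in_A[OF _ _ occ] u long assms(1) by (auto simp: longest_common_substr_def)
  show ?thesis
  proof (rule ccontr)
    assume "\<not> k < iA"
    then have "run_start rle_A (Suc iA) \<le> run_start rle_A (Suc k)" by (intro run_start_mono) simp
    then show False using start p run_start_hard_rle[OF k(2)] by (auto simp: starts_in_run_def)
  qed
qed

lemma correct_start_after_block_iff:
  assumes correct: "lcs_rle_correct rle_A rle_B ans" and Z: "Z \<subseteq> {0..<k}" and "odd L"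
  shows "k < fst ans \<longleftrightarrow> 2 * k + 2 * card Z < L"
proof -
  obtain iA iB l where ans: "ans = (iA, iB, l)" by (cases ans)
  show ?thesis
  proof (cases "2 * k + 2 * card Z < L")
    case True
    then show ?thesis
      using correct_start_after_block correct head_length_eq[OF Z] by (simp add: ans)
  next
    case False
    with \<open>odd L\<close> have "L < head_length k Z" unfolding head_length_eq[OF Z] by presburger
    then show ?thesis
      using False correct_start_before_block correct by (fastforce simp: ans)
  qed
qed

end

lemma init_in_basis_set_if_success:
  assumes "0 < success_prob n dc dr m U sel out T A B" "0 < n" "0 < dc" "0 < dr"
  shows "(0, 0, 0, 0) \<in> basis_set n dc dr m"
proof -
  have "basis_set n dc dr m \<noteq> {}" using assms(1) by (auto simp: success_prob_def)
  then show ?thesis using assms(2-) by (auto simp: basis_set_def)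
qed

lemma run_alg_threshold_lower_bound:
  fixes sel :: "nat \<Rightarrow> bool" and A B :: "nat set \<Rightarrow> rle"
  assumes h: "h < k"
    and fits: "\<And>Z. fits_registers n dc dr (A Z)" "\<And>Z. fits_registers n dc dr (B Z)"
    and agree: "\<And>Z i j. i < n \<Longrightarrow> i \<noteq> j \<Longrightarrow> A Z ! i = A (insert j Z) ! i"
      "\<And>Z i j. i < n \<Longrightarrow> i \<noteq> j \<Longrightarrow> B Z ! i = B (insert j Z) ! i"
    and un: "\<forall>t\<le>T. unitary_on (basis_set n dc dr m) (U t)"
    and init: "(0, 0, 0, 0) \<in> basis_set n dc dr m"
    and success: "\<And>Z. 2/3 \<le> success_prob n dc dr m U sel out T (A Z) (B Z)"
    and below: "\<And>Z ans. Z \<subseteq> {0..<k} \<Longrightarrow> card Z = h \<Longrightarrow> lcs_rle_correct (A Z) (B Z) ans \<Longrightarrow> P ans"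
    and above: "\<And>Z ans. Z \<subseteq> {0..<k} \<Longrightarrow> card Z = Suc h \<Longrightarrow> lcs_rle_correct (A Z) (B Z) ans \<Longrightarrow> \<not> P ans"
  shows "real (k - h) * real (h + 1) \<le> 18 * real (k + 1) * real T"
proof -
  define \<psi> where "\<psi> Z = run_alg n dc dr m U sel (A Z) (B Z)" for Z
  let ?X = "basis_set n dc dr m"
  have "1/18 * real (card {0..<k} - h) * real (h + 1) \<le> real (card {0..<k} + 1) * real T"
  proof (rule threshold_adversary_bound[where K = "{0..<k}" and X = ?X and \<psi> = \<psi>])
    show "norm2_on ?X (\<psi> Z t) = 1" if "t \<le> T" for Z t
      unfolding \<psi>_def using norm2_on_run_alg[OF fits un init] that by blast
    show "cmod (inner_on ?X (\<psi> Z t) (\<psi> (insert j Z) t))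
        - (query_magnitude ?X j (\<psi> Z t) + query_magnitude ?X j (\<psi> (insert j Z) t))
        \<le> cmod (inner_on ?X (\<psi> Z (Suc t)) (\<psi> (insert j Z) (Suc t)))"
      if "Suc t \<le> T" for Z j t
      unfolding \<psi>_def using un that by (intro cmod_inner_on_run_alg_Suc_ge fits agree) auto
    show "cmod (inner_on ?X (\<psi> Z T) (\<psi> (insert j Z) T)) \<le> 1 - 1/18"
      if Z: "Z \<subseteq> {0..<k}" "card Z = h" and j: "j \<in> {0..<k} - Z" for Z j
    proof -
      have "insert j Z \<subseteq> {0..<k}" "card (insert j Z) = Suc h"
        using Z j finite_subset[OF Z(1)] by auto
      then have "cmod (inner_on ?X (\<psi> Z T) (\<psi> (insert j Z) T)) \<le> 17/18"
        unfolding \<psi>_def using Z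
        by (intro cmod_inner_on_run_alg_le_if_answers_differ[OF fits fits un init success success,
              where P = P] below above)
      then show ?thesis by simp
    qed
  qed (use h finite_basis_set in \<open>auto simp: \<psi>_def\<close>)
  then show ?thesis by (simp add: field_simps)
qed

lemma lcs_rle_query_lower_bound:
  fixes U :: "nat \<Rightarrow> qop" and sel :: "nat \<Rightarrow> bool" and out :: "basis \<Rightarrow> nat \<times> nat \<times> nat"
  assumes h: "0 < h" "6 * h + 3 \<le> n" and dc: "n \<le> dc" and dr: "n < dr"
    and un: "\<forall>t\<le>T. unitary_on (basis_set n dc dr m) (U t)"
    and succ: "\<forall>A B. valid_rle dc dr A \<longrightarrow> valid_rle dc dr B \<longrightarrow> length A = n \<longrightarrow> length B = n \<longrightarrow>
      2/3 \<le> success_prob n dc dr m U sel out T A B"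
  shows "real (h + 1) \<le> 36 * real T"
proof -
  define k L where "k = 2 * h + 1" and "L = 6 * h + 3"
  define A B where "A Z = hard_rle n k L (k + 1) (k + 2) Z"
    and "B Z = hard_rle n k L (k + 3) (k + 4) Z" for Z
  have valid: "valid_rle dc dr (A Z)" "valid_rle dc dr (B Z)" for Z
    using h dc dr unfolding A_def B_def k_def L_def by (auto intro!: valid_rle_hard_rle)
  then have fits: "fits_registers n dc dr (A Z)" "fits_registers n dc dr (B Z)" for Z
    by (auto simp: A_def B_def intro: fits_registers_if_valid_rle)
  have success: "2/3 \<le> success_prob n dc dr m U sel out T (A Z) (B Z)" for Z
    using succ valid by (simp add: A_def B_def)
  have init: "(0, 0, 0, 0) \<in> basis_set n dc dr m"
    using success[of "{}"] h dc dr by (intro init_in_basis_set_if_success[of n dc dr m U sel out T "A {}" "B {}"]) auto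
  interpret hard_pair n k L Z for Z using h by unfold_locales (auto simp: k_def)
  have parity: "odd L" "2 * k + 2 * h < L" "\<not> 2 * k + 2 * Suc h < L" by (simp_all add: k_def L_def)
  have "real (k - h) * real (h + 1) \<le> 18 * real (k + 1) * real T"
  proof (rule run_alg_threshold_lower_bound[OF _ fits _ _ un init success,
        where P = "\<lambda>ans. k < fst ans"])
    show "A Z ! i = A (insert j Z) ! i" "B Z ! i = B (insert j Z) ! i" if "i < n" "i \<noteq> j" for Z i j
      unfolding A_def B_def by (rule hard_rle_insert_nth[OF that])+
    show "k < fst ans" if "Z \<subseteq> {0..<k}" "card Z = h" "lcs_rle_correct (A Z) (B Z) ans" for Z ans
      using that parity by (simp add: A_def B_def correct_start_after_block_iff)
    show "\<not> k < fst ans"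
      if "Z \<subseteq> {0..<k}" "card Z = Suc h" "lcs_rle_correct (A Z) (B Z) ans" for Z ans
      using that parity by (simp add: A_def B_def correct_start_after_block_iff)
  qed (simp add: k_def)
  then have "real (h + 1) * real (h + 1) \<le> real (h + 1) * (36 * real T)"
    by (simp add: k_def algebra_simps)
  then show ?thesis by simp
qed

theorem corollary2:
  "\<exists>c::real. c > 0 \<and> (\<exists>k::nat. \<exists>N0::nat. \<forall>n \<ge> N0.
     \<forall>dc dr m T (U :: nat \<Rightarrow> qop) sel out.
       dc \<ge> n \<longrightarrow> dr > n \<longrightarrow>
       (\<forall>t \<le> T. unitary_on (basis_set n dc dr m) (U t)) \<longrightarrow>
       (\<forall>A B. valid_rle dc dr A \<longrightarrow> valid_rle dc dr B \<longrightarrow>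
              length A = n \<longrightarrow> length B = n \<longrightarrow>
              success_prob n dc dr m U sel out T A B \<ge> 2/3) \<longrightarrow>
       real T \<ge> c * real n / (ln (real n)) ^ k)"
proof (rule exI[of _ "1/432"], rule conjI, simp, rule exI[of _ 0], rule exI[of _ 16], intro allI impI)
  fix n dc dr m T sel and U :: "nat \<Rightarrow> qop" and out :: "basis \<Rightarrow> nat \<times> nat \<times> nat"
  assume "16 \<le> n" "n \<le> dc" "n < dr"
    and "\<forall>t\<le>T. unitary_on (basis_set n dc dr m) (U t)"
    and "\<forall>A B. valid_rle dc dr A \<longrightarrow> valid_rle dc dr B \<longrightarrow> length A = n \<longrightarrow> length B = n \<longrightarrow>
      2/3 \<le> success_prob n dc dr m U sel out T A B"
  moreover define h where "h = (n - 3) div 6"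
  moreover have "0 < h" "6 * h + 3 \<le> n" "n \<le> 12 * (h + 1)"
    using \<open>16 \<le> n\<close> unfolding h_def by presburger+
  ultimately have "real (h + 1) \<le> 36 * real T" and "n \<le> 12 * (h + 1)"
    by (blast intro: lcs_rle_query_lower_bound)+
  then show "1/432 * real n / ln (real n) ^ 0 \<le> real T" by simp
qed

end
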